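(* Consider the principal–agent model described in the context, and let $(a^{\mathcal J},u^{\mathcal J})$ be any solution to $\max_{(a,u)\in\mathcal{J}}\{\mathbb{E}[X(a)\mid a]-c(a)-u\}$. There exists a quota-bonus contract (a contract of the form $s(x)=b\,\mathbf{1}_{\{x\ge q\}}$ with $q,b\in[0,\infty)$) that optimally solves the original problem (OP) if one of the following holds: (C1) $1-F(L(a^{\mathcal J})\mid a)\le \dfrac{c(a)+u^{\mathcal J}}{c(a^{\mathcal J})+u^{\mathcal J}}$ for all $a\in[0,a^{\mathcal J})$; or (C2) there exists $q>L(a^{\mathcal J})$ satisfying $\dfrac{-F_a(q\mid a^{\mathcal J})}{1-F(q\mid a^{\mathcal J})}=\dfrac{c'(a^{\mathcal J})}{c(a^{\mathcal J})+u^{\mathcal J}}$ such that $\dfrac{1-F(q\mid a)}{1-F(q\mid a^{\mathcal J})}\le\dfrac{c(a)+u^{\mathcal J}}{c(a^{\mathcal J})+u^{\mathcal J}}$ for all $a\ge0$.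
   Context: Model. An agent chooses effort $a\ge 0$. The outcome $X(a)$ is a continuous random variable with support $[L(a),\bar x]$, where $\bar x>0$ is fixed (possibly $+\infty$) and $L:[0,\infty)\to[0,\bar x)$ is nondecreasing on $[0,\infty)$ and continuously differentiable on $(0,\infty)$. Effort costs $c(a)$, where $c:[0,\infty)\to[0,\infty)$ is twice differentiable with $c'(a)>0$, $c''(a)\ge 0$. $X(a)$ has density $f(x\mid a)$ and cdf $F(x\mid a)$; for each fixed $x\in(L(a),\bar x]$, $f(x\mid a)$ and $F(x\mid a)$ are differentiable in $a>0$ with derivatives $f_a,F_a$, both continuous on $(L(a),\bar x]\times(0,\infty)$, and $F_a<0$ there. A contract is $s:\mathbb{R}_{\ge0}\to\mathbb{R}_{\ge0}$ (LL: $s\ge0$). $E^P(a,s)=\int_{L(a)}^{\bar x}[x-s(x)]f(x\mid a)\,dx$, $E^A(a,s)=\int_{L(a)}^{\bar x}s(x)f(x\mid a)\,dx-c(a)$, reservation utility $u_0\ge0$. The original problem (OP): maximize $E^P(a_s,s)$ over $(a_s,s)$ subject to (IC) $a_s\in\arg\max_{a\ge0}E^A(a,s)$, (IR) $E^A(a_s,s)\ge u_0$, (LL). Indifferent agents choose the effort most favorable to the principal. Standing assumption: (i) $\mathbb{E}[X(a)\mid a]<\infty$ for all $a\ge0$ and is continuous in $a$ on $[0,\infty)$; (ii) $\lim_{a\to\infty}\{\mathbb{E}[X(a)\mid a]-c(a)\}=-\infty$; (iii) $a\mapsto\sup_{x\in(L(a),\bar x]}f_a(x\mid a)/f(x\mid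 a)$ is continuous on $(0,\infty)$; (iv) for any contract $s$ with $\mathbb{E}[s(X(a))\mid a]<\infty$, the limit $h\uparrow0$ of $\int_{L(a)}^{\bar x}\frac{f(x\mid a+h)-f(x\mid a)}{h}s(x)\,dx$ may be taken inside the integral. $\mathcal{J}=\{(a,u)\mid a>0,\ u\ge u_0,\ \sup_{x\in(L(a),\bar x]} f_a(x\mid a)/f(x\mid a)\ge c'(a)/(c(a)+u)\}\cup\{(0,u)\mid u\ge u_0\}$. *)

theory Defs
  imports "HOL-Analysis.Analysis"
begin

text \<open>Outcome density f x a, cdf F x a, lower support end L a,
  upper support end xbar (an extended real, possibly infinity), effort cost c with
  derivatives c' and c''.\<close>

definition supp :: "(real \<Rightarrow> real) \<Rightarrow> ereal \<Rightarrow> real \<Rightarrow> real set" where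
  "supp L xbar a = {x. L a \<le> x \<and> ereal x \<le> xbar}"

definition osupp :: "(real \<Rightarrow> real) \<Rightarrow> ereal \<Rightarrow> real \<Rightarrow> real set" where
  "osupp L xbar a = {x. L a < x \<and> ereal x \<le> xbar}"

definition EXP :: "(real \<Rightarrow> real \<Rightarrow> real) \<Rightarrow> (real \<Rightarrow> real) \<Rightarrow> ereal \<Rightarrow> real \<Rightarrow> real" where
  "EXP f L xbar a = (LINT x:supp L xbar a|lborel. x * f x a)"

definition EP :: "(real \<Rightarrow> real \<Rightarrow> real) \<Rightarrow> (real \<Rightarrow> real) \<Rightarrow> ereal \<Rightarrow> real \<Rightarrow> (real \<Rightarrow> real) \<Rightarrow> real" where
  "EP f L xbar a s = (LINT x:supp L xbar a|lborel. (x - s x) * f x a)"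

definition EA :: "(real \<Rightarrow> real \<Rightarrow> real) \<Rightarrow> (real \<Rightarrow> real) \<Rightarrow> ereal \<Rightarrow> (real \<Rightarrow> real)
    \<Rightarrow> real \<Rightarrow> (real \<Rightarrow> real) \<Rightarrow> real" where
  "EA f L xbar c a s = (LINT x:supp L xbar a|lborel. s x * f x a) - c a"

definition contract :: "(real \<Rightarrow> real \<Rightarrow> real) \<Rightarrow> (real \<Rightarrow> real) \<Rightarrow> ereal \<Rightarrow> (real \<Rightarrow> real) \<Rightarrow> bool" where
  "contract f L xbar s \<longleftrightarrow> s \<in> borel_measurable lborel \<and> (\<forall>x\<ge>0. s x \<ge> 0) \<and>
     (\<forall>a\<ge>0. set_integrable lborel (supp L xbar a) (\<lambda>x. s x * f x a))"

definition OP_feasible where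
  "OP_feasible f L xbar c u0 a s \<longleftrightarrow> contract f L xbar s \<and> a \<ge> 0 \<and>
     (\<forall>a'\<ge>0. EA f L xbar c a' s \<le> EA f L xbar c a s) \<and> EA f L xbar c a s \<ge> u0"

definition OP_optimal where
  "OP_optimal f L xbar c u0 a s \<longleftrightarrow> OP_feasible f L xbar c u0 a s \<and>
     (\<forall>a' s'. OP_feasible f L xbar c u0 a' s' \<longrightarrow> EP f L xbar a' s' \<le> EP f L xbar a s)"

definition quota_bonus :: "real \<Rightarrow> real \<Rightarrow> real \<Rightarrow> real" where
  "quota_bonus q b = (\<lambda>x. if x \<ge> q then b else 0)"

definition Jset where
  "Jset f fa L xbar c c' u0 =
     {(a, u). a > 0 \<and> u \<ge> u0 \<and>
        (SUP x\<in>osupp L xbar a. ereal (fa x a / f x a)) \<ge> ereal (c' a / (c a + u))}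
     \<union> {(0, u) | u. u \<ge> u0}"

definition J_solution where
  "J_solution f fa L xbar c c' u0 aJ uJ \<longleftrightarrow> (aJ, uJ) \<in> Jset f fa L xbar c c' u0 \<and>
     (\<forall>(a, u) \<in> Jset f fa L xbar c c' u0.
        EXP f L xbar a - c a - u \<le> EXP f L xbar aJ - c aJ - uJ)"

definition pa_model ::
  "(real \<Rightarrow> real \<Rightarrow> real) \<Rightarrow> (real \<Rightarrow> real \<Rightarrow> real) \<Rightarrow> (real \<Rightarrow> real \<Rightarrow> real) \<Rightarrow> (real \<Rightarrow> real \<Rightarrow> real)
   \<Rightarrow> (real \<Rightarrow> real) \<Rightarrow> (real \<Rightarrow> real) \<Rightarrow> ereal
   \<Rightarrow> (real \<Rightarrow> real) \<Rightarrow> (real \<Rightarrow> real) \<Rightarrow> (real \<Rightarrow> real) \<Rightarrow> real \<Rightarrow> bool" where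
  "pa_model f F fa Fa L L' xbar c c' c'' u0 \<longleftrightarrow>
     xbar > 0 \<and> u0 \<ge> 0 \<and>
     \<comment> \<open>L : [0,oo) -> [0,xbar), nondecreasing, C^1 on (0,oo)\<close>
     (\<forall>a\<ge>0. L a \<ge> 0 \<and> ereal (L a) < xbar) \<and> mono_on {0..} L \<and>
     (\<forall>a>0. (L has_real_derivative L' a) (at a)) \<and> continuous_on {0<..} L' \<and>
     \<comment> \<open>c : [0,oo) -> [0,oo), twice differentiable, c' > 0, c'' \<ge> 0\<close>
     (\<forall>a\<ge>0. c a \<ge> 0 \<and> (c has_real_derivative c' a) (at a within {0..}) \<and>
        (c' has_real_derivative c'' a) (at a within {0..}) \<and> c' a > 0 \<and> c'' a \<ge> 0) \<and>
     \<comment> \<open>density with support [L a, xbar], and cdf\<close>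
     (\<forall>a\<ge>0. (\<lambda>x. f x a) \<in> borel_measurable lborel \<and>
        (\<forall>x. f x a \<ge> 0) \<and> (\<forall>x. x \<notin> supp L xbar a \<longrightarrow> f x a = 0) \<and>
        (\<forall>x\<in>osupp L xbar a. f x a > 0) \<and>
        set_integrable lborel (supp L xbar a) (\<lambda>x. f x a) \<and>
        (LINT x:supp L xbar a|lborel. f x a) = 1 \<and>
        (\<forall>x. F x a = (LINT t:(supp L xbar a \<inter> {..x})|lborel. f t a))) \<and>
     \<comment> \<open>differentiability in effort on (L a, xbar] x (0,oo)\<close>
     (\<forall>a>0. \<forall>x\<in>osupp L xbar a.
        ((\<lambda>b. f x b) has_real_derivative fa x a) (at a) \<and>
        ((\<lambda>b. F x b) has_real_derivative Fa x a) (at a) \<and> Fa x a < 0) \<and>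
     continuous_on {(x, a). a > 0 \<and> x \<in> osupp L xbar a} (\<lambda>(x, a). fa x a) \<and>
     continuous_on {(x, a). a > 0 \<and> x \<in> osupp L xbar a} (\<lambda>(x, a). Fa x a) \<and>
     \<comment> \<open>standing assumption (i)\<close>
     (\<forall>a\<ge>0. set_integrable lborel (supp L xbar a) (\<lambda>x. x * f x a)) \<and>
     continuous_on {0..} (EXP f L xbar) \<and>
     \<comment> \<open>(ii)\<close>
     filterlim (\<lambda>a. EXP f L xbar a - c a) at_bot at_top \<and>
     \<comment> \<open>(iii)\<close>
     continuous_on {0<..} (\<lambda>a. SUP x\<in>osupp L xbar a. ereal (fa x a / f x a)) \<and>
     \<comment> \<open>(iv)\<close>
     (\<forall>s a. a > 0 \<longrightarrow> s \<in> borel_measurable lborel \<longrightarrow> (\<forall>x\<ge>0. s x \<ge> 0) \<longrightarrow>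
        set_integrable lborel (supp L xbar a) (\<lambda>x. s x * f x a) \<longrightarrow>
        ((\<lambda>h. LINT x:supp L xbar a|lborel. (f x (a + h) - f x a) / h * s x)
           \<longlongrightarrow> (LINT x:supp L xbar a|lborel. fa x a * s x)) (at_left 0))"

end

theory Submission
  imports Defs
begin

(* If (a, s) is feasible for (OP) and a > 0, comparing effort a with slightly lower efforts
   gives the left first-order condition c'(a) <= \<integral> f_a s, and bounding f_a by
   sup(f_a/f) f turns it into c'(a) <= sup(f_a/f) (c(a) + u) with u = E^A(a, s); so (a, u)
   lies in J. As E^P = E[X(a)] - c(a) - E^A, the value of (OP) is at most the maximum over J.
   A quota-bonus contract b 1{x >= q} attains this bound as soon as b (1 - F(q|a)) - c(a) <= u^J
   for all a >= 0, with equality at a^J. Condition (C1), with q = L(a^J) and b = c(a^J) + u^J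
   (for a >= a^J it holds since c is increasing), and condition (C2), with
   b = (c(a^J) + u^J) / (1 - F(q|a^J)), are this inequality rearranged. *)

lemma supp_sets [measurable]: "supp L xbar a \<in> sets lborel"
proof -
  have "supp L xbar a = {L a..} \<inter> {x. ereal x \<le> xbar}"
    by (auto simp: supp_def)
  moreover have "{x::real. ereal x \<le> xbar} \<in> sets borel"
    by measurable
  ultimately show ?thesis
    by simp
qed

lemma quota_bonus_measurable [measurable]: "quota_bonus q b \<in> borel_measurable lborel"
proof -
  have "quota_bonus q b = (\<lambda>x. b * indicator {q..} x)"
    by (auto simp: quota_bonus_def fun_eq_iff)
  then show ?thesis
    by simp
qed

lemma set_integral_quota_bonus:
  fixes g :: "real \<Rightarrow> real"
  assumes [measurable]: "S \<in> sets lborel" and g: "set_integrable lborel S g"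
  shows "set_integrable lborel S (\<lambda>x. quota_bonus q b x * g x)"
    and "(LINT x:S|lborel. quota_bonus q b x * g x)
           = b * ((LINT x:S|lborel. g x) - (LINT x:S \<inter> {..q}|lborel. g x))"
proof -
  have above: "set_integrable lborel (S \<inter> {q..}) g"
    by (rule set_integrable_subset[OF g]) auto
  have below: "set_integrable lborel (S \<inter> {..<q}) g"
    by (rule set_integrable_subset[OF g]) auto
  have indicator_eq:
    "indicator S x *\<^sub>R (quota_bonus q b x * g x) = b * (indicator (S \<inter> {q..}) x *\<^sub>R g x)" for x
    by (auto simp: quota_bonus_def indicator_def)
  show "set_integrable lborel S (\<lambda>x. quota_bonus q b x * g x)"
    using above unfolding set_integrable_def indicator_eq by simp
  have "(S \<inter> {..<q}) \<union> (S \<inter> {q..}) = S"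
    by auto
  moreover have "(LINT x:(S \<inter> {..<q}) \<union> (S \<inter> {q..})|lborel. g x)
      = (LINT x:S \<inter> {..<q}|lborel. g x) + (LINT x:S \<inter> {q..}|lborel. g x)"
    by (rule set_integral_Un[OF _ below above]) auto
  moreover have "(LINT x:S \<inter> {..<q}|lborel. g x) = (LINT x:S \<inter> {..q}|lborel. g x)"
    by (rule set_integral_discrete_difference[of "{q}"]) auto
  moreover have "(LINT x:S|lborel. quota_bonus q b x * g x) = b * (LINT x:S \<inter> {q..}|lborel. g x)"
    unfolding set_lebesgue_integral_def indicator_eq by simp
  ultimately show "(LINT x:S|lborel. quota_bonus q b x * g x)
           = b * ((LINT x:S|lborel. g x) - (LINT x:S \<inter> {..q}|lborel. g x))"
    by simp
qed

lemma set_integral_nonneg: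
  fixes g :: "_ \<Rightarrow> real"
  assumes "\<And>x. x \<in> A \<Longrightarrow> 0 \<le> g x"
  shows "0 \<le> (LINT x:A|M. g x)"
  unfolding set_lebesgue_integral_def
  by (rule integral_nonneg_AE, rule AE_I2) (simp add: assms split: split_indicator)

lemma DERIV_pos_imp_strict_mono_on_atLeast:
  fixes g g' :: "real \<Rightarrow> real"
  assumes deriv: "\<And>x. a \<le> x \<Longrightarrow> (g has_real_derivative g' x) (at x within {a..})"
    and pos: "\<And>x. a < x \<Longrightarrow> 0 < g' x"
  shows "strict_mono_on {a..} g"
proof (rule strict_mono_onI)
  fix x y assume "x \<in> {a..}" "y \<in> {a..}" "x < y"
  show "g x < g y"
  proof (rule DERIV_pos_imp_increasing_open[OF \<open>x < y\<close>])
    fix t assume "x < t" "t < y"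
    with \<open>x \<in> {a..}\<close> have "a < t"
      by simp
    then have "at t within {a..} = at t"
      by (intro at_within_interior) auto
    then show "\<exists>d. (g has_real_derivative d) (at t) \<and> 0 < d"
      using deriv[of t] pos[of t] \<open>a < t\<close> by auto
  next
    have "continuous_on {a..} g"
      using deriv DERIV_continuous continuous_on_eq_continuous_within by (metis atLeast_iff)
    then show "continuous_on {x..y} g"
      by (rule continuous_on_subset) (use \<open>x \<in> {a..}\<close> in auto)
  qed
qed

locale principal_agent =
  fixes f F fa Fa :: "real \<Rightarrow> real \<Rightarrow> real"
    and L L' :: "real \<Rightarrow> real" and xbar :: ereal
    and c c' c'' :: "real \<Rightarrow> real" and u0 :: real
  assumes model: "pa_model f F fa Fa L L' xbar c c' c'' u0"
begin

lemma u0_nonneg: "0 \<le> u0"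
  using model by (simp add: pa_model_def)

lemma L_nonneg: "0 \<le> a \<Longrightarrow> 0 \<le> L a"
  using model by (simp add: pa_model_def)

lemma L_mono: "0 \<le> a \<Longrightarrow> a \<le> b \<Longrightarrow> L a \<le> L b"
  using model by (auto simp: pa_model_def intro: mono_onD)

lemma
  assumes "0 \<le> a"
  shows cost_nonneg: "0 \<le> c a"
    and cost_has_derivative: "(c has_real_derivative c' a) (at a within {0..})"
    and marginal_cost_pos: "0 < c' a"
  using model assms by (simp_all add: pa_model_def)

lemma
  assumes "0 \<le> a"
  shows density_nonneg: "0 \<le> f x a"
    and density_pos: "x \<in> osupp L xbar a \<Longrightarrow> 0 < f x a"
    and density_integrable: "set_integrable lborel (supp L xbar a) (\<lambda>x. f x a)"
    and density_integral: "(LINT x:supp L xbar a|lborel. f x a) = 1"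
    and cdf_eq: "F q a = (LINT x:supp L xbar a \<inter> {..q}|lborel. f x a)"
    and mean_integrable: "set_integrable lborel (supp L xbar a) (\<lambda>x. x * f x a)"
  using model assms by (simp_all add: pa_model_def)

lemma payment_derivative:
  assumes "0 < a" "contract f L xbar s"
  shows "((\<lambda>h. LINT x:supp L xbar a|lborel. (f x (a + h) - f x a) / h * s x)
           \<longlongrightarrow> (LINT x:supp L xbar a|lborel. fa x a * s x)) (at_left 0)"
  using model assms by (simp add: pa_model_def contract_def)

lemma cost_strict_mono: "strict_mono_on {0..} c"
  by (rule DERIV_pos_imp_strict_mono_on_atLeast[of 0 c c'])
    (auto intro: cost_has_derivative marginal_cost_pos)

lemma cost_mono: "0 \<le> a \<Longrightarrow> a \<le> b \<Longrightarrow> c a \<le> c b"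
  using cost_strict_mono by (auto intro: strict_mono_on_leD)

lemma payment_nonneg:
  assumes "contract f L xbar s" "0 \<le> a" "x \<in> supp L xbar a"
  shows "0 \<le> s x * f x a"
proof -
  have "0 \<le> x"
    using L_nonneg[OF \<open>0 \<le> a\<close>] \<open>x \<in> supp L xbar a\<close> by (auto simp: supp_def)
  with assms show ?thesis
    by (simp add: contract_def density_nonneg)
qed

lemma EP_eq_EXP_minus_cost_minus_EA:
  assumes "contract f L xbar s" "0 \<le> a"
  shows "EP f L xbar a s = EXP f L xbar a - c a - EA f L xbar c a s"
proof -
  have "EP f L xbar a s = (LINT x:supp L xbar a|lborel. x * f x a - s x * f x a)"
    unfolding EP_def by (simp add: algebra_simps)
  also have "\<dots> = EXP f L xbar a - (LINT x:supp L xbar a|lborel. s x * f x a)"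
    unfolding EXP_def
    using assms by (intro set_integral_diff) (auto simp: contract_def mean_integrable)
  finally show ?thesis
    unfolding EA_def by simp
qed

lemma
  assumes "0 \<le> a"
  shows EA_quota_bonus: "EA f L xbar c a (quota_bonus q b) = b * (1 - F q a) - c a"
    and set_integrable_quota_bonus_density:
      "set_integrable lborel (supp L xbar a) (\<lambda>x. quota_bonus q b x * f x a)"
  using set_integral_quota_bonus[OF supp_sets density_integrable[OF assms]]
  by (simp_all add: EA_def density_integral cdf_eq assms)

lemma contract_quota_bonus: "0 \<le> b \<Longrightarrow> contract f L xbar (quota_bonus q b)"
  using set_integrable_quota_bonus_density by (auto simp: contract_def quota_bonus_def)

lemma cdf_nonneg: "0 \<le> a \<Longrightarrow> 0 \<le> F q a"
  by (simp add: cdf_eq set_integral_nonneg density_nonneg)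

lemma cdf_le_1:
  assumes "0 \<le> a"
  shows "F q a \<le> 1"
proof -
  have "0 \<le> (LINT x:supp L xbar a|lborel. quota_bonus q 1 x * f x a)"
    by (rule set_integral_nonneg) (auto simp: quota_bonus_def density_nonneg assms)
  also have "\<dots> = 1 - F q a"
    using set_integral_quota_bonus[OF supp_sets density_integrable[OF assms]]
    by (simp add: density_integral cdf_eq assms)
  finally show ?thesis
    by simp
qed

lemma cdf_lower_end_eq_0:
  assumes "0 \<le> a"
  shows "F (L a) a = 0"
proof -
  have "supp L xbar a \<inter> {..L a} \<subseteq> {L a}"
    by (auto simp: supp_def)
  then have "(LINT x:supp L xbar a \<inter> {..L a}|lborel. f x a) = (LINT x:{}|lborel. f x a)"
    by (intro set_integral_discrete_difference[of "{L a}"]) auto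
  then show ?thesis
    by (simp add: cdf_eq assms set_lebesgue_integral_def)
qed

lemma difference_quotient_cost_le_payment:
  assumes feas: "OP_feasible f L xbar c u0 a s" and h: "-a < h" "h < 0"
  shows "(c (a + h) - c a) / h \<le> (LINT x:supp L xbar a|lborel. (f x (a + h) - f x a) / h * s x)"
proof -
  let ?S = "\<lambda>b. supp L xbar b" and ?P = "\<lambda>A b. LINT x:A|lborel. s x * f x b"
  from feas have s: "contract f L xbar s" and "0 \<le> a"
    and IC: "EA f L xbar c (a + h) s \<le> EA f L xbar c a s"
    using h by (auto simp: OP_feasible_def)
  have "0 \<le> a + h" "a + h < a"
    using h by auto
  have integrable: "set_integrable lborel (?S b) (\<lambda>x. s x * f x b)" if "0 \<le> b" for b
    using s that by (simp add: contract_def)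
  have "L (a + h) \<le> L a"
    using L_mono \<open>0 \<le> a + h\<close> \<open>a + h < a\<close> by simp
  then have subset: "?S a \<subseteq> ?S (a + h)"
    by (auto simp: supp_def)
  have integrable_sub: "set_integrable lborel (?S a) (\<lambda>x. s x * f x (a + h))"
    by (rule set_integrable_subset[OF integrable[OF \<open>0 \<le> a + h\<close>] supp_sets subset])
  \<comment> \<open>Shirking to a + h enlarges the support, and payments on the extra part are nonnegative.\<close>
  have "?P (?S a) (a + h) \<le> ?P (?S (a + h)) (a + h)"
    unfolding set_lebesgue_integral_def
  proof (rule integral_mono)
    show "indicator (?S a) x *\<^sub>R (s x * f x (a + h))
        \<le> indicator (?S (a + h)) x *\<^sub>R (s x * f x (a + h))" for x
      using subset payment_nonneg[OF s \<open>0 \<le> a + h\<close>, of x] by (auto split: split_indicator)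
  qed (use integrable_sub integrable[OF \<open>0 \<le> a + h\<close>] in \<open>simp_all add: set_integrable_def\<close>)
  also have "\<dots> \<le> ?P (?S a) a + c (a + h) - c a"
    using IC by (simp add: EA_def)
  finally have "(c (a + h) - c a) / h \<le> (?P (?S a) (a + h) - ?P (?S a) a) / h"
    using h by (intro divide_right_mono_neg) auto
  also have "\<dots> = (LINT x:?S a|lborel. (f x (a + h) - f x a) / h * s x)"
    using set_integral_diff(2)[OF integrable_sub integrable[OF \<open>0 \<le> a\<close>]]
    by (simp add: diff_divide_distrib[symmetric] algebra_simps flip: set_integral_mult_right)
  finally show ?thesis .
qed

lemma marginal_cost_le_marginal_payment:
  assumes feas: "OP_feasible f L xbar c u0 a s" and "0 < a"
  shows "c' a \<le> (LINT x:supp L xbar a|lborel. fa x a * s x)"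
proof (rule tendsto_le[OF trivial_limit_at_left_real])
  have s: "contract f L xbar s"
    using feas by (simp add: OP_feasible_def)
  then show "((\<lambda>h. LINT x:supp L xbar a|lborel. (f x (a + h) - f x a) / h * s x)
      \<longlongrightarrow> (LINT x:supp L xbar a|lborel. fa x a * s x)) (at_left 0)"
    using payment_derivative \<open>0 < a\<close> by blast
  have "at a within {0..} = at a"
    using \<open>0 < a\<close> by (intro at_within_interior) auto
  then have "(c has_real_derivative c' a) (at a)"
    using cost_has_derivative[of a] \<open>0 < a\<close> by simp
  then show "((\<lambda>h. (c (a + h) - c a) / h) \<longlongrightarrow> c' a) (at_left 0)"
    unfolding DERIV_def filterlim_at_split by blast
  have "eventually (\<lambda>h. h \<in> {-a<..<0}) (at_left 0)"
    using eventually_at_left_real[of "-a" 0] \<open>0 < a\<close> by simp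
  then show "\<forall>\<^sub>F h in at_left 0. (c (a + h) - c a) / h
      \<le> (LINT x:supp L xbar a|lborel. (f x (a + h) - f x a) / h * s x)"
    by eventually_elim (rule difference_quotient_cost_le_payment[OF feas]; simp)
qed

lemma marginal_payment_le_mult_payment:
  assumes s: "contract f L xbar s" and "0 \<le> a"
    and integrable: "set_integrable lborel (supp L xbar a) (\<lambda>x. fa x a * s x)"
    and ratio: "\<And>x. x \<in> osupp L xbar a \<Longrightarrow> fa x a / f x a \<le> z"
  shows "(LINT x:supp L xbar a|lborel. fa x a * s x) \<le> z * (LINT x:supp L xbar a|lborel. s x * f x a)"
proof -
  have "(LINT x:supp L xbar a|lborel. fa x a * s x) \<le> (LINT x:supp L xbar a|lborel. z * (s x * f x a))"
  proof (rule set_integral_mono_AE[OF integrable])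
    show "set_integrable lborel (supp L xbar a) (\<lambda>x. z * (s x * f x a))"
      using s \<open>0 \<le> a\<close> by (simp add: contract_def)
    \<comment> \<open>Off the null set {L a}, the support is the open support where f is positive.\<close>
    show "AE x\<in>supp L xbar a in lborel. fa x a * s x \<le> z * (s x * f x a)"
      using AE_lborel_singleton[of "L a"]
    proof eventually_elim
      case (elim x)
      show ?case
      proof
        assume x: "x \<in> supp L xbar a"
        with elim have "x \<in> osupp L xbar a"
          by (auto simp: supp_def osupp_def)
        then have "fa x a \<le> z * f x a"
          using ratio density_pos \<open>0 \<le> a\<close> by (simp add: divide_le_eq)
        moreover have "0 \<le> s x"
          using payment_nonneg[OF s \<open>0 \<le> a\<close> x] density_pos[OF \<open>0 \<le> a\<close> \<open>x \<in> osupp L xbar a\<close>]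
          by (simp add: zero_le_mult_iff)
        ultimately show "fa x a * s x \<le> z * (s x * f x a)"
          by (metis mult.commute mult.left_commute mult_right_mono)
      qed
    qed
  qed
  then show ?thesis
    by simp
qed

lemma feasible_in_Jset:
  assumes feas: "OP_feasible f L xbar c u0 a s"
  shows "(a, EA f L xbar c a s) \<in> Jset f fa L xbar c c' u0"
proof (cases "a = 0")
  case True
  then show ?thesis
    using feas by (simp add: Jset_def OP_feasible_def)
next
  case False
  define u where "u = EA f L xbar c a s"
  define D where "D = (LINT x:supp L xbar a|lborel. fa x a * s x)"
  from feas False have s: "contract f L xbar s" and "0 < a" "u0 \<le> u"
    by (auto simp: OP_feasible_def u_def)
  have payment: "(LINT x:supp L xbar a|lborel. s x * f x a) = c a + u"
    by (simp add: u_def EA_def)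
  have "c' a \<le> D" "0 < c' a"
    using marginal_cost_le_marginal_payment[OF feas \<open>0 < a\<close>] marginal_cost_pos \<open>0 < a\<close>
    by (simp_all add: D_def)
  \<comment> \<open>Non-integrable functions have Bochner integral 0.\<close>
  then have "D \<noteq> 0"
    by simp
  then have integrable: "set_integrable lborel (supp L xbar a) (\<lambda>x. fa x a * s x)"
    unfolding D_def set_integrable_def set_lebesgue_integral_def
    using not_integrable_integral_eq by blast
  have "ereal (c' a / (c a + u)) \<le> (SUP x\<in>osupp L xbar a. ereal (fa x a / f x a))"
  proof (rule ccontr)
    assume "\<not> ?thesis"
    then have "(SUP x\<in>osupp L xbar a. ereal (fa x a / f x a)) < ereal (c' a / (c a + u))"
      by simp
    then obtain z where z: "(SUP x\<in>osupp L xbar a. ereal (fa x a / f x a)) < ereal z"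
      "ereal z < ereal (c' a / (c a + u))"
      using ereal_dense2 by blast
    have ratio: "fa x a / f x a \<le> z" if "x \<in> osupp L xbar a" for x
      using le_less_trans[OF SUP_upper[OF that, of "\<lambda>x. ereal (fa x a / f x a)"] z(1)] by simp
    have "D \<le> z * (c a + u)"
      unfolding D_def payment[symmetric]
      by (rule marginal_payment_le_mult_payment[OF s _ integrable ratio]) (use \<open>0 < a\<close> in simp_all)
    moreover have "0 \<le> c a + u"
      unfolding payment[symmetric] using payment_nonneg[OF s] \<open>0 < a\<close>
      by (intro set_integral_nonneg) simp
    ultimately show False
      using z(2) \<open>c' a \<le> D\<close> \<open>0 < c' a\<close>
      by (cases "c a + u = 0") (simp_all add: pos_less_divide_eq)
  qed
  with \<open>0 < a\<close> \<open>u0 \<le> u\<close> show ?thesis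
    by (simp add: Jset_def u_def)
qed

end

locale J_optimum = principal_agent +
  fixes aJ uJ :: real
  assumes J_solution: "J_solution f fa L xbar c c' u0 aJ uJ"
begin

lemma aJ_nonneg: "0 \<le> aJ" and u0_le_uJ: "u0 \<le> uJ"
  using J_solution by (auto simp: J_solution_def Jset_def)

lemma EP_le_J_value:
  assumes feas: "OP_feasible f L xbar c u0 a s"
  shows "EP f L xbar a s \<le> EXP f L xbar aJ - c aJ - uJ"
proof -
  have "EP f L xbar a s = EXP f L xbar a - c a - EA f L xbar c a s"
    using feas by (intro EP_eq_EXP_minus_cost_minus_EA) (auto simp: OP_feasible_def)
  also have "\<dots> \<le> EXP f L xbar aJ - c aJ - uJ"
    using J_solution feasible_in_Jset[OF feas] unfolding J_solution_def by blast
  finally show ?thesis .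
qed

lemma OP_optimal_quota_bonus:
  assumes "0 \<le> b"
    and IC: "\<And>a. 0 \<le> a \<Longrightarrow> b * (1 - F q a) - c a \<le> uJ"
    and utility_at_aJ: "b * (1 - F q aJ) - c aJ = uJ"
  shows "OP_optimal f L xbar c u0 aJ (quota_bonus q b)"
proof -
  have s: "contract f L xbar (quota_bonus q b)"
    using \<open>0 \<le> b\<close> by (rule contract_quota_bonus)
  have feas: "OP_feasible f L xbar c u0 aJ (quota_bonus q b)"
    using s aJ_nonneg IC utility_at_aJ u0_le_uJ by (simp add: OP_feasible_def EA_quota_bonus)
  have "EP f L xbar aJ (quota_bonus q b) = EXP f L xbar aJ - c aJ - uJ"
    using EP_eq_EXP_minus_cost_minus_EA[OF s aJ_nonneg] utility_at_aJ aJ_nonneg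
    by (simp add: EA_quota_bonus)
  with feas show ?thesis
    using EP_le_J_value by (simp add: OP_optimal_def)
qed

lemma J_payment_nonneg: "0 \<le> c aJ + uJ"
  using cost_nonneg[OF aJ_nonneg] u0_nonneg u0_le_uJ by simp

lemma J_payment_pos: "0 < aJ \<Longrightarrow> 0 < c aJ + uJ"
  using cost_nonneg[of 0] strict_mono_onD[OF cost_strict_mono, of 0 aJ] u0_nonneg u0_le_uJ by simp

lemma OP_optimal_quota_bonus_C1:
  assumes C1: "\<And>a. 0 \<le> a \<Longrightarrow> a < aJ \<Longrightarrow> 1 - F (L aJ) a \<le> (c a + uJ) / (c aJ + uJ)"
  shows "OP_optimal f L xbar c u0 aJ (quota_bonus (L aJ) (c aJ + uJ))"
proof (rule OP_optimal_quota_bonus)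
  show "0 \<le> c aJ + uJ"
    by (rule J_payment_nonneg)
  show "(c aJ + uJ) * (1 - F (L aJ) aJ) - c aJ = uJ"
    by (simp add: cdf_lower_end_eq_0 aJ_nonneg)
  fix a :: real assume "0 \<le> a"
  show "(c aJ + uJ) * (1 - F (L aJ) a) - c a \<le> uJ"
  proof (cases "a < aJ")
    case True
    then show ?thesis
      using C1[OF \<open>0 \<le> a\<close> True] J_payment_pos \<open>0 \<le> a\<close> by (simp add: le_divide_eq mult.commute)
  next
    case False
    then have "c aJ \<le> c a"
      using cost_mono aJ_nonneg by simp
    moreover have "(c aJ + uJ) * (1 - F (L aJ) a) \<le> c aJ + uJ"
      using cdf_nonneg[OF \<open>0 \<le> a\<close>] \<open>0 \<le> c aJ + uJ\<close> by (simp add: mult_left_le)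
    ultimately show ?thesis
      by simp
  qed
qed

lemma OP_optimal_quota_bonus_C2:
  assumes hazard: "- Fa q aJ / (1 - F q aJ) = c' aJ / (c aJ + uJ)"
    and ratio: "\<And>a. 0 \<le> a \<Longrightarrow> (1 - F q a) / (1 - F q aJ) \<le> (c a + uJ) / (c aJ + uJ)"
  shows "OP_optimal f L xbar c u0 aJ (quota_bonus q ((c aJ + uJ) / (1 - F q aJ)))"
proof (cases "c aJ + uJ = 0")
  case True
  then show ?thesis
    using cost_nonneg u0_nonneg u0_le_uJ by (intro OP_optimal_quota_bonus) fastforce+
next
  case False
  \<comment> \<open>The hazard-rate condition is needed only to rule out 1 - F q aJ = 0.\<close>
  have "0 < c' aJ / (c aJ + uJ)"
    using False J_payment_nonneg marginal_cost_pos[OF aJ_nonneg] by simp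
  then have "1 - F q aJ \<noteq> 0"
    using hazard by auto
  then have survival_pos: "0 < 1 - F q aJ"
    using cdf_le_1[OF aJ_nonneg, of q] by simp
  show ?thesis
  proof (rule OP_optimal_quota_bonus)
    show "0 \<le> (c aJ + uJ) / (1 - F q aJ)"
      using J_payment_nonneg survival_pos by simp
    show "(c aJ + uJ) / (1 - F q aJ) * (1 - F q aJ) - c aJ = uJ"
      using survival_pos by simp
    fix a :: real assume "0 \<le> a"
    have "(c aJ + uJ) * ((1 - F q a) / (1 - F q aJ)) \<le> (c aJ + uJ) * ((c a + uJ) / (c aJ + uJ))"
      using ratio[OF \<open>0 \<le> a\<close>] J_payment_nonneg by (rule mult_left_mono)
    then show "(c aJ + uJ) / (1 - F q aJ) * (1 - F q a) - c a \<le> uJ"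
      using False by simp
  qed
qed

end

theorem theorem2:
  fixes f F fa Fa :: "real \<Rightarrow> real \<Rightarrow> real"
    and L L' c c' c'' :: "real \<Rightarrow> real"
    and xbar :: ereal and u0 aJ uJ :: real
  assumes model: "pa_model f F fa Fa L L' xbar c c' c'' u0"
    and sol: "J_solution f fa L xbar c c' u0 aJ uJ"
    and cond: "(\<forall>a. 0 \<le> a \<and> a < aJ \<longrightarrow>
                  1 - F (L aJ) a \<le> (c a + uJ) / (c aJ + uJ))
             \<or> (\<exists>q. L aJ < q \<and> ereal q < xbar \<and>
                  - Fa q aJ / (1 - F q aJ) = c' aJ / (c aJ + uJ) \<and>
                  (\<forall>a\<ge>0. (1 - F q a) / (1 - F q aJ) \<le> (c a + uJ) / (c aJ + uJ)))"
  shows "\<exists>q b. q \<ge> 0 \<and> b \<ge> 0 \<and> (\<exists>a. OP_optimal f L xbar c u0 a (quota_bonus q b))"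
proof -
  interpret J_optimum f F fa Fa L L' xbar c c' c'' u0 aJ uJ
    by (intro J_optimum.intro principal_agent.intro J_optimum_axioms.intro model sol)
  have "0 \<le> L aJ"
    by (rule L_nonneg[OF aJ_nonneg])
  from cond show ?thesis
  proof
    assume "\<forall>a. 0 \<le> a \<and> a < aJ \<longrightarrow> 1 - F (L aJ) a \<le> (c a + uJ) / (c aJ + uJ)"
    then have "OP_optimal f L xbar c u0 aJ (quota_bonus (L aJ) (c aJ + uJ))"
      by (intro OP_optimal_quota_bonus_C1) blast
    with \<open>0 \<le> L aJ\<close> J_payment_nonneg show ?thesis
      by blast
  next
    assume "\<exists>q. L aJ < q \<and> ereal q < xbar \<and>
                  - Fa q aJ / (1 - F q aJ) = c' aJ / (c aJ + uJ) \<and>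
                  (\<forall>a\<ge>0. (1 - F q a) / (1 - F q aJ) \<le> (c a + uJ) / (c aJ + uJ))"
    then obtain q where "L aJ < q" and hazard: "- Fa q aJ / (1 - F q aJ) = c' aJ / (c aJ + uJ)"
      and ratio: "\<forall>a\<ge>0. (1 - F q a) / (1 - F q aJ) \<le> (c a + uJ) / (c aJ + uJ)"
      by blast
    have "0 \<le> (c aJ + uJ) / (1 - F q aJ)"
      using J_payment_nonneg cdf_le_1[OF aJ_nonneg, of q] by simp
    with \<open>0 \<le> L aJ\<close> \<open>L aJ < q\<close> show ?thesis
      using OP_optimal_quota_bonus_C2[OF hazard] ratio by (meson less_imp_le order.trans)
  qed
qed

end
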